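(* Let $n\geq 1$ and $x^s\in\mathbb{C}^n\setminus\{0\}$. Define $g:\mathbb{C}^n\to\mathbb{R}$ by $$g(x)=\|x\|^4-\|x\|^2\|x^s\|^2-|\langle x,x^s\rangle|^2+\|x^s\|^4,$$ viewed as a smooth function of the $2n$ real coordinates of $x$ (identifying $\mathbb{C}^n$ with $\mathbb{R}^{2n}$). Then: (i) the set of points $x$ with $\nabla g(x)=0$ is exactly $E_1\cup E_2\cup E_3$, where $E_1=\{e^{i\theta}x^s:\theta\in\mathbb{R}\}$, $E_2=\{0\}$, and $E_3=\{x\in\mathbb{C}^n:\langle x^s,x\rangle=0,\ \|x\|=\|x^s\|/\sqrt{2}\}$; (ii) the set of points $x$ with $\nabla g(x)=0$ and $\nabla^2 g(x)\succeq 0$ (real Hessian positive semidefinite) is exactly $E_1$. In particular, $\nabla^2 g(0)\prec 0$ and, for every $x\in E_3$, the second derivative of $g$ at $x$ in the direction $x^s$ equals $-2\|x^s\|^4<0$.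
   Context: $\langle u,v\rangle=\sum_i \overline{u_i}v_i$ denotes the standard Hermitian product on $\mathbb{C}^n$ and $\|\cdot\|$ the associated Euclidean norm. (In the paper, $g$ is the expectation of the phase-retrieval loss $f(x)=\frac{1}{2m}\sum_{k=1}^m(|\langle x,v_k\rangle|^2-|\langle x^s,v_k\rangle|^2)^2$ over independent standard complex Gaussian measurement vectors $v_k$.) *)

theory Defs
  imports "HOL-Analysis.Analysis"
begin

definition herm :: "complex^'n \<Rightarrow> complex^'n \<Rightarrow> complex" where
  "herm u v = (\<Sum>i\<in>UNIV. cnj (u $ i) * v $ i)"

definition gfun :: "complex^'n \<Rightarrow> complex^'n \<Rightarrow> real" where
  "gfun xs x = norm x ^ 4 - norm x ^ 2 * norm xs ^ 2 - (cmod (herm x xs))\<^sup>2 + norm xs ^ 4"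

definition crit_point :: "('a::real_normed_vector \<Rightarrow> real) \<Rightarrow> 'a \<Rightarrow> bool" where
  "crit_point f x \<longleftrightarrow> (f has_derivative (\<lambda>h. 0)) (at x)"

text \<open>Real Hessian quadratic form h^T (Hess f)(x) h, i.e. the second derivative
  of f at x in direction h.\<close>
definition hess_form :: "('a::real_normed_vector \<Rightarrow> real) \<Rightarrow> 'a \<Rightarrow> 'a \<Rightarrow> real" where
  "hess_form f x h = deriv (deriv (\<lambda>t. f (x + t *\<^sub>R h))) 0"

definition hess_psd :: "('a::real_normed_vector \<Rightarrow> real) \<Rightarrow> 'a \<Rightarrow> bool" where
  "hess_psd f x \<longleftrightarrow> (\<forall>h. hess_form f x h \<ge> 0)"

definition hess_nd :: "('a::real_normed_vector \<Rightarrow> real) \<Rightarrow> 'a \<Rightarrow> bool" where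
  "hess_nd f x \<longleftrightarrow> (\<forall>h. h \<noteq> 0 \<longrightarrow> hess_form f x h < 0)"

definition E1 :: "complex^'n \<Rightarrow> (complex^'n) set" where
  "E1 xs = {cis \<theta> *s xs | \<theta>. True}"

definition E3 :: "complex^'n \<Rightarrow> (complex^'n) set" where
  "E3 xs = {x. herm xs x = 0 \<and> norm x = norm xs / sqrt 2}"

end

theory Submission
  imports Defs
begin

text \<open>Over the reals, herm x s = x \<bullet> s + i x \<bullet> (-i s), where s and -i s are orthogonal of
  equal length. So g(x) = |x|^4 - |x|^2 |s|^2 - (x \<bullet> s)^2 - (x \<bullet> (-i s))^2 + |s|^4 is a real
  quartic. Pairing its gradient with s and with -i s shows that at a critical point either
  |x| = |s|, which forces x onto the circle E1 in the real plane spanned by s and -i s, or x is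
  orthogonal to that plane, and then x = 0 or |x|^2 = |s|^2/2. The Hessian form at x in
  direction h is 8 (x \<bullet> h)^2 + 4 |x|^2 |h|^2 - 2 |h|^2 |s|^2 - 2 (h \<bullet> s)^2 - 2 (h \<bullet> (-i s))^2;
  on E1 it is nonnegative by Bessel's inequality for the pair s, -i s, while at 0 and on E3
  it is negative in direction s.\<close>

definition quarter_turn :: "complex^'n \<Rightarrow> complex^'n" where
  "quarter_turn s = (- \<i>) *s s"

lemma herm_eq_inner:
  "herm x s = complex_of_real (x \<bullet> s) + \<i> * complex_of_real (x \<bullet> quarter_turn s)"
  by (rule complex_eqI)
    (simp_all add: herm_def inner_vec_def quarter_turn_def inner_complex_def
      vector_scalar_mult_def Re_sum Im_sum algebra_simps)

lemma inner_quarter_turn_self [simp]: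
  "s \<bullet> quarter_turn s = 0" "quarter_turn s \<bullet> s = 0"
  by (simp_all add: inner_vec_def quarter_turn_def inner_complex_def vector_scalar_mult_def
      algebra_simps)

lemma inner_quarter_turn_quarter_turn [simp]: "quarter_turn s \<bullet> quarter_turn s = s \<bullet> s"
  by (simp add: inner_vec_def quarter_turn_def inner_complex_def vector_scalar_mult_def
      algebra_simps)

lemma vector_scalar_mult_eq_scaleR: "c *s s = Re c *\<^sub>R s - Im c *\<^sub>R quarter_turn s"
  by (rule vec_eq_iff[THEN iffD2], rule allI, rule complex_eqI)
    (simp_all add: quarter_turn_def vector_scalar_mult_def)

lemma herm_eq_0_iff: "herm s x = 0 \<longleftrightarrow> x \<bullet> s = 0 \<and> x \<bullet> quarter_turn s = 0"
proof -
  have "herm s x = cnj (herm x s)"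
    by (simp add: herm_def mult.commute)
  then show ?thesis
    by (simp add: herm_eq_inner complex_eq_iff)
qed

lemma power4_norm_eq_inner: "norm x ^ 4 = (x \<bullet> x)\<^sup>2"
  for x :: "'a::real_inner"
  by (metis power2_norm_eq_inner power_mult numeral_Bit0 numeral_One mult_2_right one_add_one)

lemma gfun_eq_inner:
  "gfun s x = (x \<bullet> x)\<^sup>2 - (x \<bullet> x) * (s \<bullet> s) - (x \<bullet> s)\<^sup>2 - (x \<bullet> quarter_turn s)\<^sup>2 + (s \<bullet> s)\<^sup>2"
proof -
  have "(cmod (herm x s))\<^sup>2 = (x \<bullet> s)\<^sup>2 + (x \<bullet> quarter_turn s)\<^sup>2"
    by (simp add: herm_eq_inner cmod_power2)
  then show ?thesis
    by (simp add: gfun_def power4_norm_eq_inner power2_norm_eq_inner)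
qed

lemma mem_E1_iff:
  "x \<in> E1 s \<longleftrightarrow> (\<exists>a b. a\<^sup>2 + b\<^sup>2 = 1 \<and> x = a *\<^sub>R s - b *\<^sub>R quarter_turn s)"
proof
  assume "x \<in> E1 s"
  then obtain \<theta> where "x = cis \<theta> *s s"
    by (auto simp: E1_def)
  then show "\<exists>a b. a\<^sup>2 + b\<^sup>2 = 1 \<and> x = a *\<^sub>R s - b *\<^sub>R quarter_turn s"
    by (intro exI[of _ "cos \<theta>"] exI[of _ "sin \<theta>"]) (simp add: vector_scalar_mult_eq_scaleR)
next
  assume "\<exists>a b. a\<^sup>2 + b\<^sup>2 = 1 \<and> x = a *\<^sub>R s - b *\<^sub>R quarter_turn s"
  then obtain a b where "a\<^sup>2 + b\<^sup>2 = 1" and x: "x = a *\<^sub>R s - b *\<^sub>R quarter_turn s"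
    by blast
  then obtain \<theta> where "a = cos \<theta>" "b = sin \<theta>"
    using sincos_total_2pi by blast
  then have "x = cis \<theta> *s s"
    by (simp add: x vector_scalar_mult_eq_scaleR)
  then show "x \<in> E1 s"
    by (auto simp: E1_def)
qed

lemma mem_E3_iff:
  "x \<in> E3 s \<longleftrightarrow> x \<bullet> s = 0 \<and> x \<bullet> quarter_turn s = 0 \<and> x \<bullet> x = (s \<bullet> s) / 2"
proof -
  have "norm x = norm s / sqrt 2 \<longleftrightarrow> (norm x)\<^sup>2 = (norm s / sqrt 2)\<^sup>2"
    by (simp add: power2_eq_iff_nonneg)
  also have "\<dots> \<longleftrightarrow> x \<bullet> x = (s \<bullet> s) / 2"
    by (simp add: power2_norm_eq_inner power_divide)
  finally show ?thesis
    unfolding E3_def herm_eq_0_iff by blast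
qed

definition gfun_grad :: "complex^'n \<Rightarrow> complex^'n \<Rightarrow> complex^'n" where
  "gfun_grad s x = (4 * (x \<bullet> x) - 2 * (s \<bullet> s)) *\<^sub>R x - (2 * (x \<bullet> s)) *\<^sub>R s
    - (2 * (x \<bullet> quarter_turn s)) *\<^sub>R quarter_turn s"

lemma has_derivative_gfun: "(gfun s has_derivative (\<lambda>h. h \<bullet> gfun_grad s x)) (at x)"
proof -
  have "((\<lambda>x. (x \<bullet> x)\<^sup>2 - (x \<bullet> x) * (s \<bullet> s) - (x \<bullet> s)\<^sup>2 - (x \<bullet> quarter_turn s)\<^sup>2 + (s \<bullet> s)\<^sup>2)
      has_derivative (\<lambda>h. h \<bullet> gfun_grad s x)) (at x)"
    by (rule derivative_eq_intros refl | simp)+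
      (simp add: gfun_grad_def inner_diff_right inner_commute algebra_simps)
  then show ?thesis
    by (simp add: gfun_eq_inner[abs_def])
qed

lemma crit_point_gfun_iff: "crit_point (gfun s) x \<longleftrightarrow> gfun_grad s x = 0"
proof
  assume "crit_point (gfun s) x"
  then have "(\<lambda>h. h \<bullet> gfun_grad s x) = (\<lambda>h. 0)"
    using has_derivative_unique has_derivative_gfun unfolding crit_point_def by blast
  then have "gfun_grad s x \<bullet> gfun_grad s x = 0"
    by metis
  then show "gfun_grad s x = 0"
    by simp
next
  assume "gfun_grad s x = 0"
  then show "crit_point (gfun s) x"
    using has_derivative_gfun[of s x] unfolding crit_point_def by simp
qed

lemma inner_self_E1:
  assumes "x \<in> E1 s"
  shows "x \<bullet> x = s \<bullet> s"
proof -
  obtain a b where ab: "a\<^sup>2 + b\<^sup>2 = 1" and x: "x = a *\<^sub>R s - b *\<^sub>R quarter_turn s"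
    using assms mem_E1_iff by blast
  have "x \<bullet> x = (a\<^sup>2 + b\<^sup>2) * (s \<bullet> s)"
    by (simp add: x inner_diff_left inner_diff_right power2_eq_square algebra_simps)
  with ab show ?thesis
    by simp
qed

lemma gfun_grad_E1:
  assumes "x \<in> E1 s"
  shows "gfun_grad s x = 0"
proof -
  obtain a b where x: "x = a *\<^sub>R s - b *\<^sub>R quarter_turn s"
    using assms mem_E1_iff by blast
  have "x \<bullet> s = a * (s \<bullet> s)" "x \<bullet> quarter_turn s = - b * (s \<bullet> s)"
    by (simp_all add: x inner_diff_left)
  with inner_self_E1[OF assms]
  have "gfun_grad s x = (2 * (s \<bullet> s)) *\<^sub>R (x - (a *\<^sub>R s - b *\<^sub>R quarter_turn s))"
    by (simp add: gfun_grad_def algebra_simps)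
  then show ?thesis
    by (simp add: x)
qed

lemma gfun_grad_E3: "x \<in> E3 s \<Longrightarrow> gfun_grad s x = 0"
  by (simp add: mem_E3_iff gfun_grad_def)

lemma gfun_grad_eq_0_cases:
  assumes "s \<noteq> 0" and "gfun_grad s x = 0"
  shows "x \<in> E1 s \<or> x = 0 \<or> x \<in> E3 s"
proof -
  define a b k q where "a = x \<bullet> s" and "b = x \<bullet> quarter_turn s" and "k = x \<bullet> x" and "q = s \<bullet> s"
  have "q > 0"
    using assms(1) by (simp add: q_def)
  have grad: "(4 * k - 2 * q) *\<^sub>R x = (2 * a) *\<^sub>R s + (2 * b) *\<^sub>R quarter_turn s"
    using assms(2) by (simp add: gfun_grad_def a_def b_def k_def q_def algebra_simps)
  have "(4 * k - 2 * q) * a = 2 * a * q"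
    using arg_cong[OF grad, of "\<lambda>y. y \<bullet> s"] by (simp add: inner_add_left a_def q_def)
  then have a: "(k - q) * a = 0"
    by (simp add: algebra_simps)
  have "(4 * k - 2 * q) * b = 2 * b * q"
    using arg_cong[OF grad, of "\<lambda>y. y \<bullet> quarter_turn s"] by (simp add: inner_add_left b_def q_def)
  then have b: "(k - q) * b = 0"
    by (simp add: algebra_simps)
  show ?thesis
  proof (cases "k = q")
    case True
    then have "(1 / (2 * q)) *\<^sub>R ((2 * q) *\<^sub>R x)
        = (1 / (2 * q)) *\<^sub>R ((2 * a) *\<^sub>R s + (2 * b) *\<^sub>R quarter_turn s)"
      using grad by simp
    then have x: "x = (a / q) *\<^sub>R s - (- b / q) *\<^sub>R quarter_turn s"
      using \<open>q > 0\<close> by (simp add: scaleR_add_right)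
    have "k = x \<bullet> ((a / q) *\<^sub>R s - (- b / q) *\<^sub>R quarter_turn s)"
      unfolding k_def by (simp only: flip: x)
    also have "\<dots> = (a * a + b * b) / q"
      by (simp add: inner_diff_right inner_add_right a_def b_def add_divide_distrib)
    finally have "k = (a * a + b * b) / q" .
    then have "a * a + b * b = q * q"
      using True \<open>q > 0\<close> by (simp add: field_simps)
    then have "(a / q)\<^sup>2 + (- b / q)\<^sup>2 = 1"
      using \<open>q > 0\<close> by (simp add: power2_eq_square add_divide_distrib[symmetric])
    then show ?thesis
      using x mem_E1_iff by blast
  next
    case False
    then have "a = 0" "b = 0"
      using a b by simp_all
    then have "(4 * k - 2 * q) *\<^sub>R x = 0"
      using grad by simp
    then have "x = 0 \<or> k = q / 2"
      by auto
    then show ?thesis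
      using \<open>a = 0\<close> \<open>b = 0\<close> by (auto simp: mem_E3_iff a_def b_def k_def q_def)
  qed
qed

lemma crit_points_gfun:
  "s \<noteq> 0 \<Longrightarrow> {x. crit_point (gfun s) x} = E1 s \<union> {0} \<union> E3 s"
  using gfun_grad_eq_0_cases gfun_grad_E1 gfun_grad_E3
  by (auto simp: crit_point_gfun_iff gfun_grad_def)

lemma deriv_deriv_quartic_0:
  "deriv (deriv (\<lambda>t::real. c0 + c1 * t + c2 * t\<^sup>2 + c3 * t ^ 3 + c4 * t ^ 4)) 0 = 2 * c2"
proof -
  have "deriv (\<lambda>t::real. c0 + c1 * t + c2 * t\<^sup>2 + c3 * t ^ 3 + c4 * t ^ 4)
      = (\<lambda>t. c1 + 2 * c2 * t + 3 * c3 * t\<^sup>2 + 4 * c4 * t ^ 3)"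
    by (rule ext, rule DERIV_imp_deriv) (auto intro!: derivative_eq_intros simp: eval_nat_numeral)
  moreover have "deriv (\<lambda>t::real. c1 + 2 * c2 * t + 3 * c3 * t\<^sup>2 + 4 * c4 * t ^ 3) 0 = 2 * c2"
    by (rule DERIV_imp_deriv) (auto intro!: derivative_eq_intros)
  ultimately show ?thesis
    by simp
qed

lemma gfun_along_line:
  "gfun s (x + t *\<^sub>R h) = gfun s x
    + (4 * (x \<bullet> x) * (x \<bullet> h) - 2 * (x \<bullet> h) * (s \<bullet> s) - 2 * (x \<bullet> s) * (h \<bullet> s)
       - 2 * (x \<bullet> quarter_turn s) * (h \<bullet> quarter_turn s)) * t
    + (4 * (x \<bullet> h)\<^sup>2 + 2 * (x \<bullet> x) * (h \<bullet> h) - (h \<bullet> h) * (s \<bullet> s) - (h \<bullet> s)\<^sup>2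
       - (h \<bullet> quarter_turn s)\<^sup>2) * t\<^sup>2
    + 4 * (x \<bullet> h) * (h \<bullet> h) * t ^ 3 + (h \<bullet> h)\<^sup>2 * t ^ 4"
proof -
  have expand: "(k + 2 * p * t + m * t\<^sup>2)\<^sup>2 - (k + 2 * p * t + m * t\<^sup>2) * q
      - (a + b * t)\<^sup>2 - (c + d * t)\<^sup>2 + q\<^sup>2
    = (k\<^sup>2 - k * q - a\<^sup>2 - c\<^sup>2 + q\<^sup>2) + (4 * k * p - 2 * p * q - 2 * a * b - 2 * c * d) * t
      + (4 * p\<^sup>2 + 2 * k * m - m * q - b\<^sup>2 - d\<^sup>2) * t\<^sup>2 + 4 * p * m * t ^ 3 + m\<^sup>2 * t ^ 4"
    for k p m q a b c d :: real
    by (simp add: power2_eq_square power3_eq_cube power4_eq_xxxx algebra_simps)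
  have "(x + t *\<^sub>R h) \<bullet> (x + t *\<^sub>R h) = x \<bullet> x + 2 * (x \<bullet> h) * t + (h \<bullet> h) * t\<^sup>2"
    by (simp add: inner_add_left inner_add_right inner_commute power2_eq_square)
  moreover have "(x + t *\<^sub>R h) \<bullet> v = x \<bullet> v + (h \<bullet> v) * t" for v
    by (simp add: inner_add_left)
  ultimately show ?thesis
    by (simp only: gfun_eq_inner expand)
qed

lemma hess_form_gfun:
  "hess_form (gfun s) x h = 8 * (x \<bullet> h)\<^sup>2 + 4 * (x \<bullet> x) * (h \<bullet> h) - 2 * (h \<bullet> h) * (s \<bullet> s)
    - 2 * (h \<bullet> s)\<^sup>2 - 2 * (h \<bullet> quarter_turn s)\<^sup>2"
  unfolding hess_form_def gfun_along_line deriv_deriv_quartic_0 by simp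

lemma inner_Bessel_pair:
  fixes u v h :: "'a::real_inner"
  assumes "u \<bullet> v = 0" and "v \<bullet> v = u \<bullet> u"
  shows "(h \<bullet> u)\<^sup>2 + (h \<bullet> v)\<^sup>2 \<le> (h \<bullet> h) * (u \<bullet> u)"
proof -
  define m where "m = (h \<bullet> u)\<^sup>2 + (h \<bullet> v)\<^sup>2"
  define p where "p = (h \<bullet> u) *\<^sub>R u + (h \<bullet> v) *\<^sub>R v"
  have "h \<bullet> p = m"
    by (simp add: p_def m_def inner_add_right power2_eq_square)
  moreover have "p \<bullet> p = m * (u \<bullet> u)"
    using assms by (simp add: p_def m_def inner_add_left inner_add_right inner_commute
        power2_eq_square algebra_simps)
  ultimately have "m * m \<le> ((h \<bullet> h) * (u \<bullet> u)) * m"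
    using Cauchy_Schwarz_ineq[of h p] by (simp add: power2_eq_square algebra_simps)
  moreover have "m \<ge> 0" "(h \<bullet> h) * (u \<bullet> u) \<ge> 0"
    by (simp_all add: m_def)
  ultimately have "m \<le> (h \<bullet> h) * (u \<bullet> u)"
    by (cases "m = 0") (auto intro: mult_right_le_imp_le)
  then show ?thesis
    by (simp add: m_def)
qed

lemma hess_psd_gfun_E1:
  assumes "x \<in> E1 s"
  shows "hess_psd (gfun s) x"
  unfolding hess_psd_def
proof
  fix h
  have "(h \<bullet> s)\<^sup>2 + (h \<bullet> quarter_turn s)\<^sup>2 \<le> (h \<bullet> h) * (s \<bullet> s)"
    by (rule inner_Bessel_pair) simp_all
  then show "hess_form (gfun s) x h \<ge> 0"
    using zero_le_power2[of "x \<bullet> h"] mult.commute[of "h \<bullet> h" "s \<bullet> s"]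
    unfolding hess_form_gfun inner_self_E1[OF assms] by linarith
qed

lemma hess_nd_gfun_0:
  fixes s :: "complex^'n"
  assumes "s \<noteq> 0"
  shows "hess_nd (gfun s) 0"
  unfolding hess_nd_def
proof (intro allI impI)
  fix h :: "complex^'n"
  assume "h \<noteq> 0"
  then have "(h \<bullet> h) * (s \<bullet> s) > 0"
    using assms by simp
  moreover have "hess_form (gfun s) 0 h
      = - 2 * (h \<bullet> h) * (s \<bullet> s) - 2 * (h \<bullet> s)\<^sup>2 - 2 * (h \<bullet> quarter_turn s)\<^sup>2"
    by (simp add: hess_form_gfun)
  ultimately show "hess_form (gfun s) 0 h < 0"
    using zero_le_power2[of "h \<bullet> s"] zero_le_power2[of "h \<bullet> quarter_turn s"] by linarith
qed

lemma hess_form_gfun_E3: "x \<in> E3 s \<Longrightarrow> hess_form (gfun s) x s = - 2 * norm s ^ 4"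
  by (simp add: mem_E3_iff hess_form_gfun power4_norm_eq_inner inner_commute power2_eq_square)

theorem mainTheorem2:
  fixes xs :: "complex^'n"
  assumes "xs \<noteq> 0"
  shows "{x. crit_point (gfun xs) x} = E1 xs \<union> {0} \<union> E3 xs
    \<and> {x. crit_point (gfun xs) x \<and> hess_psd (gfun xs) x} = E1 xs
    \<and> hess_nd (gfun xs) 0
    \<and> (\<forall>x\<in>E3 xs. hess_form (gfun xs) x xs = - 2 * norm xs ^ 4)"
proof -
  have crit: "{x. crit_point (gfun xs) x} = E1 xs \<union> {0} \<union> E3 xs"
    using assms by (rule crit_points_gfun)
  have nd: "hess_nd (gfun xs) 0"
    using assms by (rule hess_nd_gfun_0)
  have "\<not> hess_psd (gfun xs) x" if "x = 0 \<or> x \<in> E3 xs" for x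
  proof -
    have "hess_form (gfun xs) x xs < 0"
      using that assms nd hess_form_gfun_E3[of x xs] by (auto simp: hess_nd_def)
    then show ?thesis
      by (auto simp: hess_psd_def not_le)
  qed
  then have "{x. crit_point (gfun xs) x \<and> hess_psd (gfun xs) x} = E1 xs"
    using crit hess_psd_gfun_E1 by blast
  with crit nd hess_form_gfun_E3 show ?thesis
    by blast
qed

end
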